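(* Let $(R,\mathfrak m)$ be a noetherian local ring, $\nu$ a valuation centered on $R$, and $R\to R^{(1)}$ a local blowing up with respect to $\nu$. If $\mathrm{Nil}(R)$ is the only associated prime ideal of $R$, then $\mathrm{Nil}(R^{(1)})$ is the only associated prime ideal of $R^{(1)}$.
   Context: All rings are commutative noetherian with $1$; $\mathrm{Nil}(A)$ denotes the nilradical of $A$. A valuation on a ring $R$ is a map $\nu:R\to\Gamma\cup\{\infty\}$ ($\Gamma$ an ordered abelian group) with $\nu(ab)=\nu(a)+\nu(b)$, $\nu(a+b)\ge\min\{\nu(a),\nu(b)\}$, $\nu(1)=0$, $\nu(0)=\infty$, whose support $\mathrm{supp}(\nu)=\{a:\nu(a)=\infty\}$ is a minimal prime ideal; it extends to localizations at multiplicative sets disjoint from the support via $\nu(a/s)=\nu(a)-\nu(s)$ and restricts to subrings, implicitly. $\nu$ has a center on $R$ if $\nu\ge0$ on $R$; its center is $\mathfrak C_\nu(R)=\{a:\nu(a)>0\}$. $\nu$ is centered on $(R,\mathfrak m)$ if $\nu\ge0$ on $R$ and $\nu>0$ on $\mathfrak m$. Local blowing up: for $b\in R\setminus\mathrm{supp}(\nu)$ let $J(b)=\bigcup_{i\ge1}\mathrm{ann}_R(b^i)$, so $R/J(b)\subseteq R_b$. Given $a_1,\ldots,a_r\in R$ with $\nu(a_i)\ge\nu(b)$, let $R'=(R/J(b))[a_1/b,\ldots,a_r/b]\subseteq R_b$ and $R^{(1)}=R'_{\mathfrak C_\nu(R')}$; the canonical map $R\to R^{(1)}$ is the local blowing up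 of $R$ with respect to $\nu$ along $(b,a_1,\ldots,a_r)$. *)

theory Defs
  imports "HOL-Algebra.Algebra"
begin

section \<open>Values in an ordered abelian group extended by infinity (None = infinity)\<close>

fun vplus :: "'g::linordered_ab_group_add option \<Rightarrow> 'g option \<Rightarrow> 'g option" where
  "vplus (Some x) (Some y) = Some (x + y)"
| "vplus _ _ = None"

definition vle :: "'g::linordered_ab_group_add option \<Rightarrow> 'g option \<Rightarrow> bool" where
  "vle x y \<longleftrightarrow> y = None \<or> (\<exists>a c. x = Some a \<and> y = Some c \<and> a \<le> c)"

definition vpos :: "'g::linordered_ab_group_add option \<Rightarrow> bool" where
  "vpos x \<longleftrightarrow> x = None \<or> (\<exists>a. x = Some a \<and> 0 < a)"

definition nilrad :: "('a, 'b) ring_scheme \<Rightarrow> 'a set" where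
  "nilrad R = {a \<in> carrier R. \<exists>n::nat. a [^]\<^bsub>R\<^esub> n = \<zero>\<^bsub>R\<^esub>}"

definition ass_primes :: "('a, 'b) ring_scheme \<Rightarrow> 'a set set" where
  "ass_primes R = {P. primeideal P R \<and>
     (\<exists>x \<in> carrier R. P = {a \<in> carrier R. a \<otimes>\<^bsub>R\<^esub> x = \<zero>\<^bsub>R\<^esub>})}"

definition minimal_prime :: "'a set \<Rightarrow> ('a, 'b) ring_scheme \<Rightarrow> bool" where
  "minimal_prime P R \<longleftrightarrow> primeideal P R \<and> (\<forall>Q. primeideal Q R \<and> Q \<subseteq> P \<longrightarrow> Q = P)"

definition noeth_local_ring :: "('a, 'b) ring_scheme \<Rightarrow> 'a set \<Rightarrow> bool" where
  "noeth_local_ring R m \<longleftrightarrow> cring R \<and> noetherian_ring R \<and> maximalideal m R \<and>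
     (\<forall>I. maximalideal I R \<longrightarrow> I = m)"

definition supp :: "('a, 'b) ring_scheme \<Rightarrow> ('a \<Rightarrow> 'g::linordered_ab_group_add option) \<Rightarrow> 'a set" where
  "supp R \<nu> = {a \<in> carrier R. \<nu> a = None}"

definition valuation :: "('a, 'b) ring_scheme \<Rightarrow> ('a \<Rightarrow> 'g::linordered_ab_group_add option) \<Rightarrow> bool" where
  "valuation R \<nu> \<longleftrightarrow>
     (\<forall>a \<in> carrier R. \<forall>b \<in> carrier R. \<nu> (a \<otimes>\<^bsub>R\<^esub> b) = vplus (\<nu> a) (\<nu> b)) \<and>
     (\<forall>a \<in> carrier R. \<forall>b \<in> carrier R.
        vle (\<nu> a) (\<nu> (a \<oplus>\<^bsub>R\<^esub> b)) \<or> vle (\<nu> b) (\<nu> (a \<oplus>\<^bsub>R\<^esub> b))) \<and>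
     \<nu> \<one>\<^bsub>R\<^esub> = Some 0 \<and> \<nu> \<zero>\<^bsub>R\<^esub> = None \<and>
     minimal_prime (supp R \<nu>) R"

definition centered_on :: "('a, 'b) ring_scheme \<Rightarrow> 'a set \<Rightarrow> ('a \<Rightarrow> 'g::linordered_ab_group_add option) \<Rightarrow> bool" where
  "centered_on R m \<nu> \<longleftrightarrow> (\<forall>a \<in> carrier R. vle (Some 0) (\<nu> a)) \<and> (\<forall>a \<in> m. vpos (\<nu> a))"

definition center :: "('a, 'b) ring_scheme \<Rightarrow> ('a \<Rightarrow> 'g::linordered_ab_group_add option) \<Rightarrow> 'a set" where
  "center R \<nu> = {a \<in> carrier R. vpos (\<nu> a)}"

definition loc_rel :: "('a, 'b) ring_scheme \<Rightarrow> 'a set \<Rightarrow> (('a \<times> 'a) \<times> ('a \<times> 'a)) set" where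
  "loc_rel R S = {((a, s), (a', s')). a \<in> carrier R \<and> a' \<in> carrier R \<and> s \<in> S \<and> s' \<in> S \<and>
     (\<exists>t \<in> S. t \<otimes>\<^bsub>R\<^esub> ((a \<otimes>\<^bsub>R\<^esub> s') \<ominus>\<^bsub>R\<^esub> (a' \<otimes>\<^bsub>R\<^esub> s)) = \<zero>\<^bsub>R\<^esub>)}"

definition frac :: "('a, 'b) ring_scheme \<Rightarrow> 'a set \<Rightarrow> 'a \<Rightarrow> 'a \<Rightarrow> ('a \<times> 'a) set" where
  "frac R S a s = loc_rel R S `` {(a, s)}"

definition loc_mult :: "('a, 'b) ring_scheme \<Rightarrow> 'a set \<Rightarrow> ('a \<times> 'a) set \<Rightarrow> ('a \<times> 'a) set \<Rightarrow> ('a \<times> 'a) set" where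
  "loc_mult R S U V = \<Union>{frac R S (a \<otimes>\<^bsub>R\<^esub> a') (s \<otimes>\<^bsub>R\<^esub> s') | a s a' s'. (a, s) \<in> U \<and> (a', s') \<in> V}"

definition loc_add :: "('a, 'b) ring_scheme \<Rightarrow> 'a set \<Rightarrow> ('a \<times> 'a) set \<Rightarrow> ('a \<times> 'a) set \<Rightarrow> ('a \<times> 'a) set" where
  "loc_add R S U V = \<Union>{frac R S ((a \<otimes>\<^bsub>R\<^esub> s') \<oplus>\<^bsub>R\<^esub> (a' \<otimes>\<^bsub>R\<^esub> s)) (s \<otimes>\<^bsub>R\<^esub> s') | a s a' s'.
      (a, s) \<in> U \<and> (a', s') \<in> V}"

definition localization :: "('a, 'b) ring_scheme \<Rightarrow> 'a set \<Rightarrow> ('a \<times> 'a) set ring" where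
  "localization R S =
     \<lparr>carrier = (carrier R \<times> S) // loc_rel R S,
      monoid.mult = loc_mult R S,
      one = frac R S \<one>\<^bsub>R\<^esub> \<one>\<^bsub>R\<^esub>,
      ring.zero = frac R S \<zero>\<^bsub>R\<^esub> \<one>\<^bsub>R\<^esub>,
      ring.add = loc_add R S\<rparr>"

text \<open>Extension of a valuation to a localization: \<nu>(a/s) = \<nu>(a) - \<nu>(s)
  (well defined when S is disjoint from the support).\<close>
definition val_ext :: "('a \<Rightarrow> 'g::linordered_ab_group_add option) \<Rightarrow> ('a \<times> 'a) set \<Rightarrow> 'g option" where
  "val_ext \<nu> U = (SOME v. \<exists>(a, s) \<in> U. \<nu> a = vplus v (\<nu> s))"

definition powers :: "('a, 'b) ring_scheme \<Rightarrow> 'a \<Rightarrow> 'a set" where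
  "powers R b = {b [^]\<^bsub>R\<^esub> (n::nat) | n. True}"

text \<open>R' = (R/J(b))[a_1/b, ..., a_r/b], as a subset of R_b; the image of R in R_b is R/J(b).\<close>
definition blowup_subring :: "('a, 'b) ring_scheme \<Rightarrow> 'a \<Rightarrow> 'a list \<Rightarrow> ('a \<times> 'a) set set" where
  "blowup_subring R b as =
     generate_ring (localization R (powers R b))
       ((\<lambda>a. frac R (powers R b) a \<one>\<^bsub>R\<^esub>) ` carrier R \<union>
        (\<lambda>a. frac R (powers R b) a b) ` set as)"

definition local_blowup ::
  "('a, 'b) ring_scheme \<Rightarrow> ('a \<Rightarrow> 'g::linordered_ab_group_add option) \<Rightarrow> 'a \<Rightarrow> 'a list
     \<Rightarrow> (('a \<times> 'a) set \<times> ('a \<times> 'a) set) set ring" where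
  "local_blowup R \<nu> b as =
     (let Rb = localization R (powers R b);
          R' = (Rb\<lparr>carrier := blowup_subring R b as\<rparr>)
      in localization R' (carrier R' - center R' (val_ext \<nu>)))"

end

theory Submission
  imports Defs
begin

text \<open>Because \<open>Nil(R)\<close> is the only associated prime of the noetherian ring \<open>R\<close>, it is the
  annihilator of an element \<open>x\<close>, it is the support of \<open>\<nu>\<close>, and every zero divisor of \<open>R\<close> is
  nilpotent (the annihilator of a nonzero element lies in an associated prime). Hence \<open>b\<close> is a
  non-zero-divisor, \<open>J(b) = 0\<close>, and \<open>R\<^sup>(\<^sup>1\<^sup>)\<close> arises from \<open>R\<close> by localizing at non-zero-divisors, passing to
  a subring \<open>R'\<close> of \<open>R\<^sub>b\<close> containing \<open>x/1\<close>, and localizing again at non-zero-divisors: elements of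
  \<open>R'\<close> outside the centre of \<open>\<nu>\<close> have finite value, so they are not nilpotent. The three
  properties \<open>1 \<noteq> 0\<close>, "zero divisors are nilpotent" and "\<open>Nil\<close> is an annihilator" survive
  both operations, and together they make \<open>Nil\<close> the only associated prime.\<close>

section \<open>Associated primes and nilpotent zero divisors\<close>

definition annihilator :: "('a, 'b) ring_scheme \<Rightarrow> 'a \<Rightarrow> 'a set" where
  "annihilator R x = {a \<in> carrier R. a \<otimes>\<^bsub>R\<^esub> x = \<zero>\<^bsub>R\<^esub>}"

definition zero_divisors_nilpotent :: "('a, 'b) ring_scheme \<Rightarrow> bool" where
  "zero_divisors_nilpotent R \<longleftrightarrow>
     (\<forall>a \<in> carrier R. \<forall>c \<in> carrier R. a \<otimes>\<^bsub>R\<^esub> c = \<zero>\<^bsub>R\<^esub> \<longrightarrow> c \<noteq> \<zero>\<^bsub>R\<^esub> \<longrightarrow> a \<in> nilrad R)"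

lemma ass_primes_annihilator:
  "ass_primes R = {P. primeideal P R \<and> (\<exists>x \<in> carrier R. P = annihilator R x)}"
  by (simp add: ass_primes_def annihilator_def)

lemma zero_divisors_nilpotentD:
  "zero_divisors_nilpotent R \<Longrightarrow> a \<in> carrier R \<Longrightarrow> c \<in> carrier R \<Longrightarrow> a \<otimes>\<^bsub>R\<^esub> c = \<zero>\<^bsub>R\<^esub>
    \<Longrightarrow> a \<notin> nilrad R \<Longrightarrow> c = \<zero>\<^bsub>R\<^esub>"
  unfolding zero_divisors_nilpotent_def by blast

context cring
begin

lemma annihilator_ideal:
  assumes x: "x \<in> carrier R"
  shows "ideal (annihilator R x) R"
proof (rule idealI)
  show "subgroup (annihilator R x) (add_monoid R)"
  proof (rule add.subgroupI)
    show "annihilator R x \<noteq> {}"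
      using x by (auto simp: annihilator_def intro!: exI[of _ \<zero>])
  qed (use x in \<open>auto simp: annihilator_def l_minus l_distr\<close>)
next
  fix a y assume "a \<in> annihilator R x" and y: "y \<in> carrier R"
  then have "a \<in> carrier R" "a \<otimes> x = \<zero>" by (auto simp: annihilator_def)
  then show "y \<otimes> a \<in> annihilator R x" "a \<otimes> y \<in> annihilator R x"
    using x y by (auto simp: annihilator_def m_assoc m_comm[of a y])
qed (rule ring_axioms)

lemma nat_pow_in_nilradD:
  assumes x: "x \<in> carrier R" and "x [^] (n::nat) \<in> nilrad R"
  shows "x \<in> nilrad R"
proof -
  obtain k :: nat where "(x [^] n) [^] k = \<zero>"
    using assms(2) by (auto simp: nilrad_def)
  then have "x [^] (n * k) = \<zero>" using x by (simp add: nat_pow_pow)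
  then show ?thesis using x by (auto simp: nilrad_def)
qed

lemma primeideal_nat_pow_mem:
  assumes P: "primeideal P R" and x: "x \<in> carrier R"
  shows "x [^] (n::nat) \<in> P \<Longrightarrow> x \<in> P"
proof (induction n)
  case 0
  then show ?case
    using primeideal.I_notcarr[OF P] ideal.one_imp_carrier[OF primeideal.axioms(1)[OF P]] by simp
next
  case (Suc n)
  then show ?case using primeideal.I_prime[OF P, of "x [^] n" x] x by auto
qed

lemma nilrad_subset_primeideal:
  assumes P: "primeideal P R"
  shows "nilrad R \<subseteq> P"
proof
  fix x assume "x \<in> nilrad R"
  then obtain n where x: "x \<in> carrier R" "x [^] (n::nat) = \<zero>" by (auto simp: nilrad_def)
  have "\<zero> \<in> P"
    using additive_subgroup.zero_closed[OF ideal.axioms(1)[OF primeideal.axioms(1)[OF P]]] by simp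
  then show "x \<in> P" using primeideal_nat_pow_mem[OF P x(1), of n] x(2) by simp
qed

lemma maximal_annihilator_primeideal:
  assumes z: "z \<in> carrier R" "z \<noteq> \<zero>"
    and maximal: "\<And>z'. z' \<in> carrier R \<Longrightarrow> z' \<noteq> \<zero> \<Longrightarrow> annihilator R z \<subseteq> annihilator R z'
      \<Longrightarrow> annihilator R z' = annihilator R z"
  shows "primeideal (annihilator R z) R"
proof (rule primeidealI[OF annihilator_ideal[OF z(1)] is_cring])
  have "\<one> \<notin> annihilator R z" using z by (simp add: annihilator_def)
  then show "carrier R \<noteq> annihilator R z" by blast
next
  fix u v assume u: "u \<in> carrier R" and v: "v \<in> carrier R" and uv: "u \<otimes> v \<in> annihilator R z"
  show "u \<in> annihilator R z \<or> v \<in> annihilator R z"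
  proof (cases "u \<in> annihilator R z")
    case False
    then have "u \<otimes> z \<noteq> \<zero>" using u by (simp add: annihilator_def)
    moreover have "annihilator R z \<subseteq> annihilator R (u \<otimes> z)"
      using u z by (auto simp: annihilator_def m_lcomm[of _ u z])
    ultimately have "annihilator R (u \<otimes> z) = annihilator R z"
      using maximal u z by simp
    moreover have "v \<in> annihilator R (u \<otimes> z)"
    proof -
      have "v \<otimes> (u \<otimes> z) = (u \<otimes> v) \<otimes> z" using u v z by algebra
      then show ?thesis using uv v by (simp add: annihilator_def)
    qed
    ultimately show ?thesis by simp
  qed simp
qed

text \<open>A maximal annihilator containing \<open>annihilator R c\<close> exists by noetherianity and is prime.\<close>
lemma annihilator_subset_ass_prime:
  assumes "noetherian_ring R" and c: "c \<in> carrier R" "c \<noteq> \<zero>"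
  obtains P where "P \<in> ass_primes R" "annihilator R c \<subseteq> P"
proof -
  interpret noetherian_ring R by fact
  define A where "A = {annihilator R z | z. z \<in> carrier R \<and> z \<noteq> \<zero> \<and> annihilator R c \<subseteq> annihilator R z}"
  have "\<Union>C \<in> A" if "C \<noteq> {}" "subset.chain A C" for C
  proof -
    have "A \<subseteq> {I. ideal I R}" unfolding A_def using annihilator_ideal by blast
    then have "subset.chain {I. ideal I R} C" using that(2) unfolding pred_on.chain_def by blast
    then have "\<Union>C \<in> C" using ideal_chain_is_trivial that(1) by blast
    then show ?thesis using that(2) unfolding pred_on.chain_def by blast
  qed
  moreover have "A \<noteq> {}" using c unfolding A_def by blast
  ultimately obtain M where M: "M \<in> A" "\<And>Y. Y \<in> A \<Longrightarrow> M \<subseteq> Y \<Longrightarrow> Y = M"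
    using subset_Zorn_nonempty[of A] by blast
  then obtain z where z: "z \<in> carrier R" "z \<noteq> \<zero>" "annihilator R c \<subseteq> annihilator R z"
    and Mz: "M = annihilator R z" unfolding A_def by blast
  have "primeideal (annihilator R z) R"
  proof (rule maximal_annihilator_primeideal[OF z(1,2)])
    fix z' assume z': "z' \<in> carrier R" "z' \<noteq> \<zero>" "annihilator R z \<subseteq> annihilator R z'"
    then have "annihilator R z' \<in> A" using z(3) unfolding A_def by blast
    then show "annihilator R z' = annihilator R z" using M(2) Mz z'(3) by blast
  qed
  then show ?thesis using that z by (auto simp: ass_primes_annihilator)
qed

lemma zero_divisors_nilpotent_if_ass_primes_eq_nilrad:
  assumes "noetherian_ring R" and ass: "ass_primes R = {nilrad R}"
  shows "zero_divisors_nilpotent R"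
  unfolding zero_divisors_nilpotent_def
proof (intro ballI impI)
  fix a c assume "a \<in> carrier R" "c \<in> carrier R" "a \<otimes> c = \<zero>" "c \<noteq> \<zero>"
  moreover obtain P where "P \<in> ass_primes R" "annihilator R c \<subseteq> P"
    using annihilator_subset_ass_prime[OF assms(1)] calculation(2,4) by blast
  ultimately show "a \<in> nilrad R" using ass by (auto simp: annihilator_def)
qed

lemma ass_primes_eq_nilradE:
  assumes "noetherian_ring R" and ass: "ass_primes R = {nilrad R}"
  obtains x where "\<one> \<noteq> \<zero>" "zero_divisors_nilpotent R" "primeideal (nilrad R) R"
    "x \<in> carrier R" "nilrad R = annihilator R x"
proof -
  have "nilrad R \<in> ass_primes R" using ass by simp
  then obtain x where prime: "primeideal (nilrad R) R" and x: "x \<in> carrier R" "nilrad R = annihilator R x"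
    unfolding ass_primes_annihilator by blast
  have "\<one> \<noteq> \<zero>"
  proof
    assume "\<one> = \<zero>"
    then have "\<one> \<in> nilrad R" by (auto simp: nilrad_def intro!: exI[of _ "0::nat"])
    then show False
      using primeideal.I_notcarr[OF prime] ideal.one_imp_carrier[OF primeideal.axioms(1)[OF prime]] by blast
  qed
  then show ?thesis
    using that prime x zero_divisors_nilpotent_if_ass_primes_eq_nilrad[OF assms] by blast
qed

lemma ass_primes_eq_nilradI:
  assumes one: "\<one> \<noteq> \<zero>" and nzd: "zero_divisors_nilpotent R"
    and x: "x \<in> carrier R" and nil_ann: "nilrad R = annihilator R x"
  shows "ass_primes R = {nilrad R}"
proof -
  have prime: "primeideal (nilrad R) R"
  proof (rule primeidealI[OF _ is_cring])
    show "ideal (nilrad R) R" using nil_ann annihilator_ideal[OF x] by simp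
    have "\<one> \<notin> nilrad R" using one by (simp add: nilrad_def)
    then show "carrier R \<noteq> nilrad R" by blast
  next
    fix a c assume a: "a \<in> carrier R" and c: "c \<in> carrier R" and "a \<otimes> c \<in> nilrad R"
    then obtain n :: nat where "(a \<otimes> c) [^] n = \<zero>" by (auto simp: nilrad_def)
    then have "a [^] n \<otimes> c [^] n = \<zero>" using a c by (simp add: nat_pow_distrib)
    then have "a [^] n \<in> nilrad R \<or> c [^] n = \<zero>"
      using zero_divisors_nilpotentD[OF nzd] a c by blast
    then show "a \<in> nilrad R \<or> c \<in> nilrad R"
      using nat_pow_in_nilradD a c by (auto simp: nilrad_def)
  qed
  have "P = nilrad R" if P_ass: "P \<in> ass_primes R" for P
  proof -
    obtain y where P: "primeideal P R" and y: "y \<in> carrier R" and Py: "P = annihilator R y"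
      using P_ass unfolding ass_primes_annihilator by blast
    have "y \<noteq> \<zero>"
      using primeideal.I_notcarr[OF P] Py by (auto simp: annihilator_def)
    then have "P \<subseteq> nilrad R" using zero_divisors_nilpotentD[OF nzd] y Py by (auto simp: annihilator_def)
    then show ?thesis using nilrad_subset_primeideal[OF P] by blast
  qed
  then show ?thesis using prime x nil_ann by (auto simp: ass_primes_annihilator)
qed

end

section \<open>Localization at non-zero-divisors\<close>

locale regular_localization = cring R for R :: "('a, 'b) ring_scheme" (structure) +
  fixes S :: "'a set"
  assumes S_subset: "S \<subseteq> carrier R"
    and one_in_S: "\<one> \<in> S"
    and S_mult_closed: "s \<in> S \<Longrightarrow> t \<in> S \<Longrightarrow> s \<otimes> t \<in> S"
    and S_regular: "s \<in> S \<Longrightarrow> a \<in> carrier R \<Longrightarrow> s \<otimes> a = \<zero> \<Longrightarrow> a = \<zero>"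
begin

abbreviation L where "L \<equiv> localization R S"
abbreviation fr where "fr \<equiv> frac R S"

lemma S_carrier: "s \<in> S \<Longrightarrow> s \<in> carrier R"
  using S_subset by auto

lemma S_nat_pow_closed: "s \<in> S \<Longrightarrow> s [^] (n::nat) \<in> S"
  by (induction n) (simp_all add: one_in_S S_mult_closed S_carrier)

lemma S_cancel:
  assumes "s \<in> S" "x \<in> carrier R" "y \<in> carrier R" "s \<otimes> x = s \<otimes> y"
  shows "x = y"
proof -
  have "s \<otimes> (x \<ominus> y) = \<zero>"
    using assms S_carrier[OF assms(1)] by (simp add: r_distr minus_eq r_minus r_neg)
  then have "x \<ominus> y = \<zero>" using S_regular assms by blast
  then show ?thesis using assms r_right_minus_eq by blast
qed

lemma loc_rel_iff:
  "((a, s), (a', s')) \<in> loc_rel R S \<longleftrightarrow>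
     a \<in> carrier R \<and> a' \<in> carrier R \<and> s \<in> S \<and> s' \<in> S \<and> a \<otimes> s' = a' \<otimes> s"
proof
  assume "((a, s), (a', s')) \<in> loc_rel R S"
  then obtain t where t: "t \<in> S" "t \<otimes> ((a \<otimes> s') \<ominus> (a' \<otimes> s)) = \<zero>"
    and c: "a \<in> carrier R" "a' \<in> carrier R" "s \<in> S" "s' \<in> S" unfolding loc_rel_def by blast
  have cc: "s \<in> carrier R" "s' \<in> carrier R" using c S_carrier by auto
  have "(a \<otimes> s') \<ominus> (a' \<otimes> s) = \<zero>"
    using S_regular[OF t(1) _ t(2)] c cc by simp
  then show "a \<in> carrier R \<and> a' \<in> carrier R \<and> s \<in> S \<and> s' \<in> S \<and> a \<otimes> s' = a' \<otimes> s"
    using c cc r_right_minus_eq by simp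
next
  assume h: "a \<in> carrier R \<and> a' \<in> carrier R \<and> s \<in> S \<and> s' \<in> S \<and> a \<otimes> s' = a' \<otimes> s"
  then have "s \<in> carrier R" "s' \<in> carrier R" using S_carrier by auto
  with h have "\<one> \<otimes> ((a \<otimes> s') \<ominus> (a' \<otimes> s)) = \<zero>" by simp
  then show "((a, s), (a', s')) \<in> loc_rel R S" unfolding loc_rel_def using one_in_S h by blast
qed

lemma loc_rel_equiv: "equiv (carrier R \<times> S) (loc_rel R S)"
proof (rule equivI)
  show "loc_rel R S \<subseteq> (carrier R \<times> S) \<times> (carrier R \<times> S)" unfolding loc_rel_def by blast
  show "refl_on (carrier R \<times> S) (loc_rel R S)"
    by (rule refl_onI) (auto simp: loc_rel_iff)
  show "sym (loc_rel R S)"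
    unfolding sym_def by (auto simp: loc_rel_iff)
  show "trans (loc_rel R S)" unfolding trans_def
  proof (clarify)
    fix a s a' s' a'' s''
    assume "((a, s), (a', s')) \<in> loc_rel R S" "((a', s'), (a'', s'')) \<in> loc_rel R S"
    then have c: "a \<in> carrier R" "a' \<in> carrier R" "a'' \<in> carrier R" "s \<in> S" "s' \<in> S" "s'' \<in> S"
      and e1: "a \<otimes> s' = a' \<otimes> s" and e2: "a' \<otimes> s'' = a'' \<otimes> s'"
      by (auto simp: loc_rel_iff)
    have cc: "s \<in> carrier R" "s' \<in> carrier R" "s'' \<in> carrier R" using c S_carrier by auto
    have "s' \<otimes> (a \<otimes> s'') = (a \<otimes> s') \<otimes> s''" using c cc by algebra
    also have "\<dots> = (a' \<otimes> s'') \<otimes> s" using e1 c cc by algebra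
    also have "\<dots> = s' \<otimes> (a'' \<otimes> s)" using e2 c cc by algebra
    finally have "s' \<otimes> (a \<otimes> s'') = s' \<otimes> (a'' \<otimes> s)" .
    then have "a \<otimes> s'' = a'' \<otimes> s" using S_cancel[OF c(5)] c cc by simp
    then show "((a, s), (a'', s'')) \<in> loc_rel R S" using c by (simp add: loc_rel_iff)
  qed
qed

lemma mem_frac_iff: "(a', s') \<in> fr a s \<longleftrightarrow> ((a, s), (a', s')) \<in> loc_rel R S"
  unfolding frac_def by auto

lemma frac_eq_iff:
  "a \<in> carrier R \<Longrightarrow> s \<in> S \<Longrightarrow> a' \<in> carrier R \<Longrightarrow> s' \<in> S \<Longrightarrow>
     fr a s = fr a' s' \<longleftrightarrow> a \<otimes> s' = a' \<otimes> s"
  unfolding frac_def using eq_equiv_class_iff[OF loc_rel_equiv] loc_rel_iff by auto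

lemma localization_simps:
  "carrier L = (carrier R \<times> S) // loc_rel R S" "monoid.mult L = loc_mult R S"
  "ring.add L = loc_add R S" "\<one>\<^bsub>L\<^esub> = fr \<one> \<one>" "\<zero>\<^bsub>L\<^esub> = fr \<zero> \<one>"
  by (simp_all add: localization_def)

lemma frac_closed: "a \<in> carrier R \<Longrightarrow> s \<in> S \<Longrightarrow> fr a s \<in> carrier L"
  unfolding localization_simps frac_def by (auto intro: quotientI)

lemma frac_cases:
  assumes "U \<in> carrier L"
  obtains a s where "a \<in> carrier R" "s \<in> S" "U = fr a s"
  using assms unfolding localization_simps frac_def by (auto elim!: quotientE)

text \<open>The ring operations of the localization are unions over all pairs of representatives;
  such a union is a single fraction once the result does not depend on the representatives.\<close>
lemma Union_frac_representatives:
  assumes "a \<in> carrier R" "s \<in> S" "c \<in> carrier R" "t \<in> S"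
    and compat: "\<And>a' s' c' t'. a' \<in> carrier R \<Longrightarrow> s' \<in> S \<Longrightarrow> c' \<in> carrier R \<Longrightarrow> t' \<in> S \<Longrightarrow>
      a \<otimes> s' = a' \<otimes> s \<Longrightarrow> c \<otimes> t' = c' \<otimes> t \<Longrightarrow> fr (f a' s' c' t') (g s' t') = fr (f a s c t) (g s t)"
  shows "\<Union>{fr (f a' s' c' t') (g s' t') | a' s' c' t'. (a', s') \<in> fr a s \<and> (c', t') \<in> fr c t}
    = fr (f a s c t) (g s t)"
proof -
  have "(a, s) \<in> fr a s" "(c, t) \<in> fr c t" using assms(1-4) by (simp_all add: mem_frac_iff loc_rel_iff)
  moreover have "fr (f a' s' c' t') (g s' t') = fr (f a s c t) (g s t)"
    if "(a', s') \<in> fr a s" "(c', t') \<in> fr c t" for a' s' c' t'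
    using that by (intro compat) (simp_all add: mem_frac_iff loc_rel_iff)
  ultimately have "{fr (f a' s' c' t') (g s' t') | a' s' c' t'. (a', s') \<in> fr a s \<and> (c', t') \<in> fr c t}
    = {fr (f a s c t) (g s t)}" by blast
  then show ?thesis by simp
qed

lemma frac_mult:
  assumes a: "a \<in> carrier R" "s \<in> S" and c: "c \<in> carrier R" "t \<in> S"
  shows "fr a s \<otimes>\<^bsub>L\<^esub> fr c t = fr (a \<otimes> c) (s \<otimes> t)"
  unfolding localization_simps loc_mult_def
proof (rule Union_frac_representatives[OF a c, where f = "\<lambda>a s c t. a \<otimes> c" and g = "(\<otimes>)"])
  fix a' s' c' t' assume c': "a' \<in> carrier R" "s' \<in> S" "c' \<in> carrier R" "t' \<in> S"
    and e: "a \<otimes> s' = a' \<otimes> s" "c \<otimes> t' = c' \<otimes> t"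
  have "(a' \<otimes> c') \<otimes> (s \<otimes> t) = (a' \<otimes> s) \<otimes> (c' \<otimes> t)"
    using a c c' S_carrier by algebra
  also have "\<dots> = (a \<otimes> c) \<otimes> (s' \<otimes> t')"
    unfolding e[symmetric] using a c c' S_carrier by algebra
  finally show "fr (a' \<otimes> c') (s' \<otimes> t') = fr (a \<otimes> c) (s \<otimes> t)"
    using a c c' by (simp add: frac_eq_iff S_mult_closed)
qed

lemma frac_add:
  assumes a: "a \<in> carrier R" "s \<in> S" and c: "c \<in> carrier R" "t \<in> S"
  shows "fr a s \<oplus>\<^bsub>L\<^esub> fr c t = fr ((a \<otimes> t) \<oplus> (c \<otimes> s)) (s \<otimes> t)"
  unfolding localization_simps loc_add_def
proof (rule Union_frac_representatives[OF a c, where f = "\<lambda>a s c t. (a \<otimes> t) \<oplus> (c \<otimes> s)" and g = "(\<otimes>)"])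
  fix a' s' c' t' assume c': "a' \<in> carrier R" "s' \<in> S" "c' \<in> carrier R" "t' \<in> S"
    and e: "a \<otimes> s' = a' \<otimes> s" "c \<otimes> t' = c' \<otimes> t"
  have "((a' \<otimes> t') \<oplus> (c' \<otimes> s')) \<otimes> (s \<otimes> t) = (a' \<otimes> s) \<otimes> (t' \<otimes> t) \<oplus> (c' \<otimes> t) \<otimes> (s' \<otimes> s)"
    using a c c' S_carrier by algebra
  also have "\<dots> = ((a \<otimes> t) \<oplus> (c \<otimes> s)) \<otimes> (s' \<otimes> t')"
    unfolding e[symmetric] using a c c' S_carrier by algebra
  finally show "fr ((a' \<otimes> t') \<oplus> (c' \<otimes> s')) (s' \<otimes> t') = fr ((a \<otimes> t) \<oplus> (c \<otimes> s)) (s \<otimes> t)"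
    using a c c' by (simp add: frac_eq_iff S_mult_closed S_carrier)
qed

lemma localization_cring: "cring L"
proof (rule cringI[OF abelian_groupI comm_monoidI])
  note frac_simps [simp] = frac_add frac_mult frac_closed frac_eq_iff
    S_mult_closed S_carrier one_in_S localization_simps(4,5)
  show "\<zero>\<^bsub>L\<^esub> \<in> carrier L" "\<one>\<^bsub>L\<^esub> \<in> carrier L" by simp_all
  fix x y z assume "x \<in> carrier L" "y \<in> carrier L" "z \<in> carrier L"
  then obtain a s c t d u where fracs: "a \<in> carrier R" "s \<in> S" "c \<in> carrier R" "t \<in> S"
    "d \<in> carrier R" "u \<in> S" and xyz: "x = fr a s" "y = fr c t" "z = fr d u"
    by (metis frac_cases)
  have denominators: "s \<in> carrier R" "t \<in> carrier R" "u \<in> carrier R"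
    using fracs S_carrier by simp_all
  show "x \<oplus>\<^bsub>L\<^esub> y \<in> carrier L" "x \<otimes>\<^bsub>L\<^esub> y \<in> carrier L"
    "\<zero>\<^bsub>L\<^esub> \<oplus>\<^bsub>L\<^esub> x = x" "\<one>\<^bsub>L\<^esub> \<otimes>\<^bsub>L\<^esub> x = x"
    using fracs unfolding xyz by simp_all
  show "x \<otimes>\<^bsub>L\<^esub> y \<otimes>\<^bsub>L\<^esub> z = x \<otimes>\<^bsub>L\<^esub> (y \<otimes>\<^bsub>L\<^esub> z)"
    using fracs unfolding xyz by (simp add: m_assoc)
  show "x \<otimes>\<^bsub>L\<^esub> y = y \<otimes>\<^bsub>L\<^esub> x"
    using fracs unfolding xyz by (simp add: m_comm)
  show "x \<oplus>\<^bsub>L\<^esub> y \<oplus>\<^bsub>L\<^esub> z = x \<oplus>\<^bsub>L\<^esub> (y \<oplus>\<^bsub>L\<^esub> z)"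
    "x \<oplus>\<^bsub>L\<^esub> y = y \<oplus>\<^bsub>L\<^esub> x"
    "(x \<oplus>\<^bsub>L\<^esub> y) \<otimes>\<^bsub>L\<^esub> z = x \<otimes>\<^bsub>L\<^esub> z \<oplus>\<^bsub>L\<^esub> y \<otimes>\<^bsub>L\<^esub> z"
    using fracs denominators unfolding xyz by (simp; algebra)+
  have "fr (\<ominus> a) s \<oplus>\<^bsub>L\<^esub> x = \<zero>\<^bsub>L\<^esub>"
    using fracs denominators unfolding xyz by (simp add: l_minus l_neg)
  then show "\<exists>y \<in> carrier L. y \<oplus>\<^bsub>L\<^esub> x = \<zero>\<^bsub>L\<^esub>"
    using fracs frac_closed[OF a_inv_closed] by blast
qed

lemma frac_eq_zero_iff: "a \<in> carrier R \<Longrightarrow> s \<in> S \<Longrightarrow> fr a s = \<zero>\<^bsub>L\<^esub> \<longleftrightarrow> a = \<zero>"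
  using frac_eq_iff[of a s \<zero> \<one>] by (simp add: localization_simps one_in_S S_carrier)

lemma frac_nat_pow:
  "a \<in> carrier R \<Longrightarrow> s \<in> S \<Longrightarrow> fr a s [^]\<^bsub>L\<^esub> (n::nat) = fr (a [^] n) (s [^] n)"
  by (induction n) (simp_all add: localization_simps(4) frac_mult S_nat_pow_closed)

lemma frac_in_nilrad_iff: "a \<in> carrier R \<Longrightarrow> s \<in> S \<Longrightarrow> fr a s \<in> nilrad L \<longleftrightarrow> a \<in> nilrad R"
  unfolding nilrad_def using frac_closed by (simp add: frac_nat_pow frac_eq_zero_iff S_nat_pow_closed)

lemma localization_one_neq_zero: "\<one> \<noteq> \<zero> \<Longrightarrow> \<one>\<^bsub>L\<^esub> \<noteq> \<zero>\<^bsub>L\<^esub>"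
  using frac_eq_zero_iff[of \<one> \<one>] by (simp add: localization_simps one_in_S)

lemma localization_zero_divisors_nilpotent:
  assumes nzd: "zero_divisors_nilpotent R"
  shows "zero_divisors_nilpotent L"
  unfolding zero_divisors_nilpotent_def
proof (intro ballI impI)
  fix x y assume "x \<in> carrier L" "y \<in> carrier L" and xy: "x \<otimes>\<^bsub>L\<^esub> y = \<zero>\<^bsub>L\<^esub>" and y: "y \<noteq> \<zero>\<^bsub>L\<^esub>"
  then obtain a s c t where fracs: "a \<in> carrier R" "s \<in> S" "c \<in> carrier R" "t \<in> S"
    and xy_eq: "x = fr a s" "y = fr c t" by (metis frac_cases)
  have "a \<otimes> c = \<zero>" using xy fracs unfolding xy_eq by (simp add: frac_mult frac_eq_zero_iff S_mult_closed)
  moreover have "c \<noteq> \<zero>" using y fracs unfolding xy_eq by (simp add: frac_eq_zero_iff)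
  ultimately have "a \<in> nilrad R" using nzd fracs by (auto simp: zero_divisors_nilpotent_def)
  then show "x \<in> nilrad L" using fracs unfolding xy_eq by (simp add: frac_in_nilrad_iff)
qed

lemma localization_nilrad_eq_annihilator:
  assumes x: "x \<in> carrier R" and nil_ann: "nilrad R = annihilator R x"
  shows "nilrad L = annihilator L (fr x \<one>)"
proof (intro equalityI subsetI)
  fix y assume "y \<in> nilrad L"
  then have y: "y \<in> carrier L" by (simp add: nilrad_def)
  then obtain a s where fracs: "a \<in> carrier R" "s \<in> S" "y = fr a s" by (rule frac_cases)
  moreover have "a \<in> nilrad R" using \<open>y \<in> nilrad L\<close> fracs by (simp add: frac_in_nilrad_iff)
  ultimately show "y \<in> annihilator L (fr x \<one>)" using x nil_ann
    by (simp add: annihilator_def frac_closed frac_mult frac_eq_zero_iff S_mult_closed one_in_S)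
next
  fix y assume y: "y \<in> annihilator L (fr x \<one>)"
  then obtain a s where fracs: "a \<in> carrier R" "s \<in> S" "y = fr a s"
    by (auto simp: annihilator_def elim: frac_cases)
  then have "a \<in> annihilator R x" using x y
    by (simp add: annihilator_def frac_mult frac_eq_zero_iff S_mult_closed one_in_S)
  then show "y \<in> nilrad L" using fracs nil_ann by (simp add: frac_in_nilrad_iff)
qed

lemma localization_ass_primes_eq_nilrad:
  assumes "\<one> \<noteq> \<zero>" "zero_divisors_nilpotent R" "x \<in> carrier R" "nilrad R = annihilator R x"
  shows "ass_primes L = {nilrad L}"
proof (rule cring.ass_primes_eq_nilradI[OF localization_cring])
  show "\<one>\<^bsub>L\<^esub> \<noteq> \<zero>\<^bsub>L\<^esub>" using assms(1) by (rule localization_one_neq_zero)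
  show "zero_divisors_nilpotent L" using assms(2) by (rule localization_zero_divisors_nilpotent)
  show "fr x \<one> \<in> carrier L" using assms(3) one_in_S by (rule frac_closed)
  show "nilrad L = annihilator L (fr x \<one>)" using assms(3,4) by (rule localization_nilrad_eq_annihilator)
qed

end

context ring
begin

lemma subring_nilrad: "subring G R \<Longrightarrow> nilrad (R\<lparr>carrier := G\<rparr>) = nilrad R \<inter> G"
  using subringE(1) by (auto simp: nilrad_def nat_pow_consistent[symmetric])

lemma subring_nilrad_eq_annihilator:
  "subring G R \<Longrightarrow> x \<in> G \<Longrightarrow> nilrad R = annihilator R x \<Longrightarrow>
    nilrad (R\<lparr>carrier := G\<rparr>) = annihilator (R\<lparr>carrier := G\<rparr>) x"
  using subringE(1) by (auto simp: subring_nilrad annihilator_def)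

lemma subring_zero_divisors_nilpotent:
  assumes "subring G R" "zero_divisors_nilpotent R"
  shows "zero_divisors_nilpotent (R\<lparr>carrier := G\<rparr>)"
  using assms subringE(1)[OF assms(1)] by (auto simp: zero_divisors_nilpotent_def subring_nilrad)

end

section \<open>Extending a valuation to a localization\<close>

lemma vplus_comm: "vplus x y = vplus y x"
  by (cases x; cases y) (simp_all add: add.commute)

lemma vplus_assoc: "vplus (vplus x y) z = vplus x (vplus y z)"
  by (cases x; cases y; cases z) (simp_all add: add.assoc)

lemma vplus_eq_None_iff: "vplus x y = None \<longleftrightarrow> x = None \<or> y = None"
  by (cases x; cases y) simp_all

lemma vplus_left_commute: "vplus x (vplus y z) = vplus y (vplus x z)"
  by (cases x; cases y; cases z) (simp_all add: add.left_commute)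

lemmas vplus_ac = vplus_assoc vplus_comm vplus_left_commute

lemma vplus_right_cancel: "y \<noteq> None \<Longrightarrow> vplus x y = vplus x' y \<Longrightarrow> x = x'"
  by (cases x; cases x'; cases y) simp_all

lemma vplus_zero: "vplus x (Some 0) = x"
  by (cases x) simp_all

locale valued_regular_localization = regular_localization +
  fixes \<nu> :: "'a \<Rightarrow> 'g::linordered_ab_group_add option"
  assumes val_mult: "a \<in> carrier R \<Longrightarrow> c \<in> carrier R \<Longrightarrow> \<nu> (a \<otimes> c) = vplus (\<nu> a) (\<nu> c)"
    and val_S_finite: "s \<in> S \<Longrightarrow> \<nu> s \<noteq> None"
    and val_eq_None_iff: "a \<in> carrier R \<Longrightarrow> \<nu> a = None \<longleftrightarrow> a \<in> nilrad R"
begin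

lemma val_ext_frac:
  assumes a: "a \<in> carrier R" and s: "s \<in> S"
  shows "vplus (val_ext \<nu> (fr a s)) (\<nu> s) = \<nu> a"
proof -
  obtain g where g: "\<nu> s = Some g" using val_S_finite[OF s] by blast
  have "vplus (map_option (\<lambda>h. h - g) (\<nu> a)) (\<nu> s) = \<nu> a"
    unfolding g by (cases "\<nu> a") simp_all
  moreover have "(a, s) \<in> fr a s" using a s by (simp add: mem_frac_iff loc_rel_iff)
  ultimately have ex: "\<exists>v. \<exists>(a', s') \<in> fr a s. \<nu> a' = vplus v (\<nu> s')"
    by (intro exI[of _ "map_option (\<lambda>h. h - g) (\<nu> a)"] bexI[of _ "(a, s)"]) auto
  obtain a' s' where rep: "(a', s') \<in> fr a s"
    and val_rep: "\<nu> a' = vplus (val_ext \<nu> (fr a s)) (\<nu> s')"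
    using someI_ex[OF ex] unfolding val_ext_def by blast
  from rep have a': "a' \<in> carrier R" "s' \<in> S" and cross: "a \<otimes> s' = a' \<otimes> s"
    by (simp_all add: mem_frac_iff loc_rel_iff)
  have "vplus (\<nu> a) (\<nu> s') = vplus (\<nu> a') (\<nu> s)"
    using cross a a' s by (simp add: val_mult[symmetric] S_carrier)
  also have "\<dots> = vplus (vplus (val_ext \<nu> (fr a s)) (\<nu> s)) (\<nu> s')"
    unfolding val_rep by (simp add: vplus_assoc vplus_comm[of "\<nu> s"])
  finally show ?thesis using vplus_right_cancel[OF val_S_finite[OF a'(2)]] by metis
qed

lemma val_ext_mult:
  assumes "U \<in> carrier L" "V \<in> carrier L"
  shows "val_ext \<nu> (U \<otimes>\<^bsub>L\<^esub> V) = vplus (val_ext \<nu> U) (val_ext \<nu> V)"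
proof -
  obtain a s c t where fracs: "a \<in> carrier R" "s \<in> S" "c \<in> carrier R" "t \<in> S"
    and UV: "U = fr a s" "V = fr c t" using assms by (metis frac_cases)
  have "vplus (val_ext \<nu> (U \<otimes>\<^bsub>L\<^esub> V)) (\<nu> (s \<otimes> t)) = vplus (\<nu> a) (\<nu> c)"
    using val_ext_frac[of "a \<otimes> c" "s \<otimes> t"] fracs val_mult unfolding UV
    by (simp add: frac_mult S_mult_closed)
  also have "\<dots> = vplus (vplus (val_ext \<nu> U) (\<nu> s)) (vplus (val_ext \<nu> V) (\<nu> t))"
    using fracs unfolding UV by (simp add: val_ext_frac)
  also have "\<dots> = vplus (vplus (val_ext \<nu> U) (val_ext \<nu> V)) (\<nu> (s \<otimes> t))"
    using fracs by (simp add: val_mult S_carrier vplus_ac)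
  finally show ?thesis
    using vplus_right_cancel[OF val_S_finite[OF S_mult_closed[OF fracs(2,4)]]] by metis
qed

lemma val_ext_one: "val_ext \<nu> \<one>\<^bsub>L\<^esub> = Some 0"
proof -
  have "vplus (val_ext \<nu> (fr \<one> \<one>)) (\<nu> \<one>) = vplus (Some 0) (\<nu> \<one>)"
    using val_ext_frac[OF one_closed one_in_S] by (simp add: vplus_comm[of "Some 0"] vplus_zero)
  then show ?thesis
    using vplus_right_cancel[OF val_S_finite[OF one_in_S]] by (simp add: localization_simps)
qed

lemma val_ext_eq_None_iff:
  assumes "U \<in> carrier L"
  shows "val_ext \<nu> U = None \<longleftrightarrow> U \<in> nilrad L"
proof -
  obtain a s where frac: "a \<in> carrier R" "s \<in> S" "U = fr a s"
    using assms by (rule frac_cases)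
  then show ?thesis
    using val_ext_frac[OF frac(1,2)] val_S_finite[OF frac(2)] val_eq_None_iff[OF frac(1)]
    by (auto simp: vplus_eq_None_iff frac_in_nilrad_iff)
qed

text \<open>Elements of finite value are not nilpotent, hence not zero divisors.\<close>
lemma regular_localization_center_complement:
  assumes G: "subring G L" and nzd: "zero_divisors_nilpotent (L\<lparr>carrier := G\<rparr>)"
  shows "regular_localization (L\<lparr>carrier := G\<rparr>) (G - center (L\<lparr>carrier := G\<rparr>) (val_ext \<nu>))"
    (is "regular_localization ?G ?T")
proof -
  interpret L: cring L by (rule localization_cring)
  have G_carrier: "G \<subseteq> carrier L" using subringE(1)[OF G] .
  have T_iff: "U \<in> ?T \<longleftrightarrow> U \<in> G \<and> (\<exists>g. val_ext \<nu> U = Some g \<and> g \<le> 0)" for U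
    by (cases "val_ext \<nu> U") (auto simp: center_def vpos_def)
  show ?thesis
  proof (intro regular_localization.intro regular_localization_axioms.intro)
    show "cring ?G" using L.subcring_iff[OF G_carrier] L.subcringI'[OF G] by simp
    show "?T \<subseteq> carrier ?G" by auto
    show "\<one>\<^bsub>?G\<^esub> \<in> ?T" using subringE(3)[OF G] T_iff[of "\<one>\<^bsub>L\<^esub>"] by (simp add: val_ext_one)
  next
    fix U V assume U: "U \<in> ?T" and V: "V \<in> ?T"
    from U[unfolded T_iff] V[unfolded T_iff] obtain g h where UV: "U \<in> G" "V \<in> G"
      and vals: "val_ext \<nu> U = Some g" "val_ext \<nu> V = Some h" "g \<le> 0" "h \<le> 0"
      by blast
    have "val_ext \<nu> (U \<otimes>\<^bsub>L\<^esub> V) = Some (g + h)"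
      using val_ext_mult[of U V] UV G_carrier vals by auto
    then show "U \<otimes>\<^bsub>?G\<^esub> V \<in> ?T"
      unfolding T_iff using subringE(6)[OF G] UV vals(3,4) by (auto intro: add_nonpos_nonpos)
  next
    fix U V assume U: "U \<in> ?T" and V: "V \<in> carrier ?G" and UV: "U \<otimes>\<^bsub>?G\<^esub> V = \<zero>\<^bsub>?G\<^esub>"
    have "U \<notin> nilrad L" using U[unfolded T_iff] G_carrier by (auto simp: val_ext_eq_None_iff[symmetric])
    then have "U \<notin> nilrad ?G" using L.subring_nilrad[OF G] by blast
    then show "V = \<zero>\<^bsub>?G\<^esub>" using zero_divisors_nilpotentD[OF nzd, of U V] U V UV by simp
  qed
qed

end

section \<open>Local blowing up\<close>

context cring
begin

lemma supp_eq_nilrad: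
  assumes "valuation R \<nu>" and "primeideal (nilrad R) R"
  shows "supp R \<nu> = nilrad R"
proof -
  have "minimal_prime (supp R \<nu>) R" using assms(1) by (simp add: valuation_def)
  moreover from this have "nilrad R \<subseteq> supp R \<nu>"
    by (intro nilrad_subset_primeideal) (simp add: minimal_prime_def)
  ultimately show ?thesis using assms(2) unfolding minimal_prime_def by blast
qed

lemma self_in_powers: "b \<in> carrier R \<Longrightarrow> b \<in> powers R b"
  unfolding powers_def by (auto intro!: exI[of _ "1::nat"])

lemma powers_not_nilrad:
  "b \<in> carrier R \<Longrightarrow> b \<notin> nilrad R \<Longrightarrow> s \<in> powers R b \<Longrightarrow> s \<in> carrier R \<and> s \<notin> nilrad R"
  using nat_pow_in_nilradD by (auto simp: powers_def)

lemma valued_regular_localization_powers: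
  assumes nzd: "zero_divisors_nilpotent R" and val: "valuation R \<nu>"
    and supp: "supp R \<nu> = nilrad R" and b: "b \<in> carrier R" "b \<notin> nilrad R"
  shows "valued_regular_localization R (powers R b) \<nu>"
proof (intro valued_regular_localization.intro regular_localization_axioms.intro
    valued_regular_localization_axioms.intro regular_localization.intro is_cring)
  show "powers R b \<subseteq> carrier R" using powers_not_nilrad[OF b] by blast
  show "\<one> \<in> powers R b" by (auto simp: powers_def intro!: exI[of _ "0::nat"])
  show "s \<otimes> t \<in> powers R b" if "s \<in> powers R b" "t \<in> powers R b" for s t
    using that b(1) by (auto simp: powers_def nat_pow_mult)
  show "a = \<zero>" if "s \<in> powers R b" "a \<in> carrier R" "s \<otimes> a = \<zero>" for s a
    using that powers_not_nilrad[OF b] zero_divisors_nilpotentD[OF nzd] by blast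
  show "\<nu> (a \<otimes> c) = vplus (\<nu> a) (\<nu> c)" if "a \<in> carrier R" "c \<in> carrier R" for a c
    using that val by (simp add: valuation_def)
  show "\<nu> a = None \<longleftrightarrow> a \<in> nilrad R" if "a \<in> carrier R" for a
    using that supp by (auto simp: supp_def)
  then show "\<nu> s \<noteq> None" if "s \<in> powers R b" for s
    using that powers_not_nilrad[OF b] by blast
qed

end

context regular_localization
begin

lemma subring_blowup_subring:
  assumes "S = powers R b" "b \<in> carrier R" "set as \<subseteq> carrier R"
  shows "subring (blowup_subring R b as) L"
proof -
  interpret L: cring L by (rule localization_cring)
  have "b \<in> S" using assms(1,2) self_in_powers by simp
  then show ?thesis
    unfolding blowup_subring_def assms(1)[symmetric]
    by (intro L.generate_ring_is_subring) (use assms(3) one_in_S in \<open>auto intro: frac_closed\<close>)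
qed

end

lemma frac_one_in_blowup_subring:
  "a \<in> carrier R \<Longrightarrow> frac R (powers R b) a \<one>\<^bsub>R\<^esub> \<in> blowup_subring R b as"
  unfolding blowup_subring_def by (rule generate_ring.incl) blast

lemma ass_primes_local_blowup:
  fixes \<nu> :: "'a \<Rightarrow> 'g::linordered_ab_group_add option"
  assumes R: "cring R" "noetherian_ring R" and val: "valuation R \<nu>"
    and b: "b \<in> carrier R" "b \<notin> supp R \<nu>" and as: "set as \<subseteq> carrier R"
    and ass: "ass_primes R = {nilrad R}"
  shows "ass_primes (local_blowup R \<nu> b as) = {nilrad (local_blowup R \<nu> b as)}"
proof -
  interpret cring R by fact
  obtain x where one: "\<one>\<^bsub>R\<^esub> \<noteq> \<zero>\<^bsub>R\<^esub>" and nzd: "zero_divisors_nilpotent R"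
    and prime: "primeideal (nilrad R) R" and x: "x \<in> carrier R" "nilrad R = annihilator R x"
    using ass_primes_eq_nilradE[OF R(2) ass] by blast
  have supp: "supp R \<nu> = nilrad R" by (rule supp_eq_nilrad[OF val prime])
  interpret A: valued_regular_localization R "powers R b" \<nu>
    using valued_regular_localization_powers[OF nzd val supp] b supp by simp
  define G where "G = blowup_subring R b as"
  define R' where "R' = A.L\<lparr>carrier := G\<rparr>"
  have G: "subring G A.L"
    unfolding G_def by (rule A.subring_blowup_subring[OF refl b(1) as])
  interpret L: cring A.L by (rule A.localization_cring)
  have one': "\<one>\<^bsub>R'\<^esub> \<noteq> \<zero>\<^bsub>R'\<^esub>"
    using A.localization_one_neq_zero[OF one] by (simp add: R'_def)
  have nzd': "zero_divisors_nilpotent R'"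
    unfolding R'_def by (rule L.subring_zero_divisors_nilpotent[OF G A.localization_zero_divisors_nilpotent[OF nzd]])
  have nil': "nilrad R' = annihilator R' (A.fr x \<one>\<^bsub>R\<^esub>)"
    unfolding R'_def using frac_one_in_blowup_subring[OF x(1)]
    by (intro L.subring_nilrad_eq_annihilator[OF G _ A.localization_nilrad_eq_annihilator[OF x]])
      (simp add: G_def)
  interpret B: regular_localization R' "carrier R' - center R' (val_ext \<nu>)"
    using A.regular_localization_center_complement[OF G nzd'[unfolded R'_def]] by (simp add: R'_def)
  have "ass_primes B.L = {nilrad B.L}"
    using B.localization_ass_primes_eq_nilrad[OF one' nzd' _ nil'] frac_one_in_blowup_subring[OF x(1)]
    by (simp add: R'_def G_def)
  then show ?thesis by (simp add: local_blowup_def Let_def R'_def G_def)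
qed

theorem mainTheorem9:
  fixes R :: "('a, 'b) ring_scheme" and m :: "'a set"
    and \<nu> :: "'a \<Rightarrow> 'g::linordered_ab_group_add option"
    and b :: 'a and as :: "'a list"
  assumes "noeth_local_ring R m"
    and "valuation R \<nu>"
    and "centered_on R m \<nu>"
    and "b \<in> carrier R" and "b \<notin> supp R \<nu>"
    and "set as \<subseteq> carrier R"
    and "\<forall>a \<in> set as. vle (\<nu> b) (\<nu> a)"
    and "ass_primes R = {nilrad R}"
  shows "ass_primes (local_blowup R \<nu> b as) = {nilrad (local_blowup R \<nu> b as)}"
  using assms(1) by (intro ass_primes_local_blowup[OF _ _ assms(2,4,5,6,8)]) (simp_all add: noeth_local_ring_def)

end
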